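(* Let $n\ge1$, and let $\tau^1,\dots,\tau^n$, $\eta^{\mathcal J}$, $\Lambda^{\mathcal J}$ be as in the context. Let $t_1,\dots,t_n\ge0$ and let $\sigma$ be a permutation of $\{1,\dots,n\}$ with $t_{\sigma(1)}\le t_{\sigma(2)}\le\cdots\le t_{\sigma(n)}$. For $k=1,\dots,n$ set $A_k:=\{\sigma(k),\sigma(k+1),\dots,\sigma(n)\}$ and $A_{n+1}:=\emptyset$. Then for all $t$ with $0\le t\le\min(t_1,\dots,t_n)$, $$ \mathbb P(\tau^1>t_1,\dots,\tau^n>t_n\mid\mathcal F_t)=\eta^{A_1}_t\exp\left(-\sum_{k=1}^n\left(\Lambda^{A_k}_{t_{\sigma(k)}}-\Lambda^{A_{k+1}}_{t_{\sigma(k)}}\right)\right), $$ where $A_1=\{1,\dots,n\}$ and $\Lambda^{\emptyset}\equiv0$.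
   Context: Let $(\Omega,\mathcal G,\mathbb F,\mathbb P)$ be a filtered probability space, $\mathbb F=(\mathcal F_t)_{t\ge0}$ satisfying the usual conditions. For $i=1,\dots,n$, let $K^i$ be an $\mathbb F$-adapted, càdlàg, increasing process with $K^i_0=0$ (possibly dependent across $i$), and let $\Theta^1,\dots,\Theta^n$ be unit exponential random variables, mutually independent and independent of $\mathcal F_\infty$. Define $\tau^i:=\inf\{t\ge0:K^i_t\ge\Theta^i\}$. For nonempty $\mathcal J\subseteq\{1,\dots,n\}$ let $K^{\mathcal J}:=\sum_{j\in\mathcal J}K^j$ (and $K^{\{i\}}=K^i$); then $\mathbb P(\min_{j\in\mathcal J}\tau^j>t\mid\mathcal F_t)=e^{-K^{\mathcal J}_t}$. Let $K^{\mathcal J,c}$ be the continuous part of $K^{\mathcal J}$, let $I^{\mathcal J}_t:=\sum_{s\le t}(1-e^{-\Delta K^{\mathcal J}_s})$ with canonical decomposition $I^{\mathcal J}=M^{I^{\mathcal J}}+A^{I^{\mathcal J}}$ ($M^{I^{\mathcal J}}$ an $\mathbb F$-local martingale, $A^{I^{\mathcal J}}$ $\mathbb F$-predictable of finite variation), and set $\Lambda^{\mathcal J}:=K^{\mathcal J,c}+A^{I^{\mathcal J}}$; set $\Lambda^\emptyset:=0$. Standing assumptions: for every nonempty $\mathcal J$, $K^{\mathcal J,c}$ and $A^{I^{\mathcal J}}$ are deterministic, $\Lambda^{\mathcal J}$ is continuous (as holds when the associated random times are totally inaccessible), and $e^{-K^{\mathcal J}_t}=\eta^{\mathcal J}_t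 e^{-\Lambda^{\mathcal J}_t}$ with $\eta^{\mathcal J}$ a nonnegative $\mathbb F$-martingale, $\eta^{\mathcal J}_0=1$. Write $\Lambda^i=\Lambda^{\{i\}}$, $\eta^i=\eta^{\{i\}}$. *)

theory Defs
  imports "HOL-Probability.Probability"
begin

definition filtration :: "'a measure \<Rightarrow> (real \<Rightarrow> 'a measure) \<Rightarrow> bool" where
  "filtration M F \<longleftrightarrow> (\<forall>t\<ge>0. subalgebra M (F t)) \<and>
     (\<forall>s t. 0 \<le> s \<and> s \<le> t \<longrightarrow> sets (F s) \<subseteq> sets (F t))"

text \<open>Usual conditions: right-continuity and completeness (F 0 contains all
  subsets of M-null sets, which also forces M to be complete).\<close>
definition usual_conditions :: "'a measure \<Rightarrow> (real \<Rightarrow> 'a measure) \<Rightarrow> bool" where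
  "usual_conditions M F \<longleftrightarrow> filtration M F \<and>
     (\<forall>t\<ge>0. sets (F t) = (\<Inter>s\<in>{t<..}. sets (F s))) \<and>
     (\<forall>A. A \<subseteq> space M \<and> (\<exists>N\<in>null_sets M. A \<subseteq> N) \<longrightarrow> A \<in> sets (F 0))"

definition adapted :: "(real \<Rightarrow> 'a measure) \<Rightarrow> (real \<Rightarrow> 'a \<Rightarrow> real) \<Rightarrow> bool" where
  "adapted F X \<longleftrightarrow> (\<forall>t\<ge>0. X t \<in> borel_measurable (F t))"

definition cadlag :: "'a measure \<Rightarrow> (real \<Rightarrow> 'a \<Rightarrow> real) \<Rightarrow> bool" where
  "cadlag M X \<longleftrightarrow> (\<forall>\<omega>\<in>space M. \<forall>t\<ge>0.
      ((\<lambda>s. X s \<omega>) \<longlongrightarrow> X t \<omega>) (at_right t) \<and>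
      (t > 0 \<longrightarrow> (\<exists>l. ((\<lambda>s. X s \<omega>) \<longlongrightarrow> l) (at_left t))))"

definition martingale :: "'a measure \<Rightarrow> (real \<Rightarrow> 'a measure) \<Rightarrow> (real \<Rightarrow> 'a \<Rightarrow> real) \<Rightarrow> bool" where
  "martingale M F X \<longleftrightarrow> adapted F X \<and> (\<forall>t\<ge>0. integrable M (X t)) \<and>
     (\<forall>s t. 0 \<le> s \<and> s \<le> t \<longrightarrow> (AE \<omega> in M. real_cond_exp M (F s) (X t) \<omega> = X s \<omega>))"

text \<open>First passage time tau^i = inf{t >= 0 : K^i_t >= Theta^i}, with inf {} = oo.\<close>
definition hit_time :: "(real \<Rightarrow> 'a \<Rightarrow> real) \<Rightarrow> ('a \<Rightarrow> real) \<Rightarrow> 'a \<Rightarrow> ereal" where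
  "hit_time K \<Theta> \<omega> = Inf {ereal t | t. 0 \<le> t \<and> K t \<omega> \<ge> \<Theta> \<omega>}"

end

theory Submission
  imports Defs
begin

(* Since K^i is increasing and right-continuous, tau^i > t_i iff K^i(t_i) < Theta^i.  Given F_T
   with T >= max t_i the thresholds are still independent unit exponentials, so the joint survival
   probability given F_T is exp (- sum_i K^i(t_i)); by the tower property the left-hand side equals
   E[exp (- sum_i K^i(t_i)) | F_t].

   This is evaluated by backward induction along the sorted times.  Put Z^A = exp (Lambda^A - K^A),
   which is eta^A for nonempty A and 1 for A = {}.  At every time
   e^(-K^sigma(k)) Z^(A_(k+1)) = Z^(A_k) e^(Lambda^(A_(k+1)) - Lambda^(A_k)),
   so conditioning first on F at time t_sigma(k) and then using the martingale property of
   Z^(A_k) peels off one deterministic factor at a time. *)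

lemma hit_time_gt_iff:
  assumes right_cont: "((\<lambda>s. X s \<omega>) \<longlongrightarrow> X t \<omega>) (at_right t)"
    and mono: "mono_on {0..} (\<lambda>s. X s \<omega>)" and "0 \<le> t"
  shows "ereal t < hit_time X \<Theta> \<omega> \<longleftrightarrow> X t \<omega> < \<Theta> \<omega>"
proof
  assume "ereal t < hit_time X \<Theta> \<omega>"
  moreover have "hit_time X \<Theta> \<omega> \<le> ereal t" if "\<Theta> \<omega> \<le> X t \<omega>"
    unfolding hit_time_def using that \<open>0 \<le> t\<close> by (intro Inf_lower) auto
  ultimately show "X t \<omega> < \<Theta> \<omega>" by fastforce
next
  assume lt: "X t \<omega> < \<Theta> \<omega>"
  then have "eventually (\<lambda>s. X s \<omega> < \<Theta> \<omega>) (at_right t)"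
    using right_cont order_tendstoD(2) by blast
  then obtain b where "t < b" and below: "\<And>s. t < s \<Longrightarrow> s < b \<Longrightarrow> X s \<omega> < \<Theta> \<omega>"
    by (auto simp: eventually_at_right_field)
  have "ereal b \<le> hit_time X \<Theta> \<omega>"
    unfolding hit_time_def
  proof (rule Inf_greatest, clarify)
    fix s assume "0 \<le> s" "\<Theta> \<omega> \<le> X s \<omega>"
    moreover have "X s \<omega> \<le> X t \<omega>" if "s \<le> t"
      using mono_onD[OF mono] that \<open>0 \<le> s\<close> by auto
    ultimately show "ereal b \<le> ereal s"
      using lt below by (meson ereal_less_eq(3) leI less_le_trans not_le)
  qed
  with \<open>t < b\<close> show "ereal t < hit_time X \<Theta> \<omega>"
    by (meson ereal_less_eq(3) less_le_trans not_le order_less_imp_le ereal_less(2))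
qed

lemma mono_on_nonneg_of_zero:
  fixes f :: "real \<Rightarrow> real"
  assumes "mono_on {0..} f" "f 0 = 0" "0 \<le> t"
  shows "0 \<le> f t"
  using mono_onD[OF assms(1), of 0 t] assms(2,3) by simp

lemma filtration_subalgebra: "filtration M F \<Longrightarrow> 0 \<le> t \<Longrightarrow> subalgebra M (F t)"
  by (simp add: filtration_def)

lemma filtration_subalgebra_mono:
  assumes "filtration M F" "0 \<le> s" "s \<le> t"
  shows "subalgebra (F t) (F s)"
  using assms by (auto simp: filtration_def subalgebra_def)

lemma (in prob_space) martingale_cong:
  assumes F: "filtration M F" and X: "martingale M F X"
    and eq: "\<And>t \<omega>. 0 \<le> t \<Longrightarrow> \<omega> \<in> space M \<Longrightarrow> X t \<omega> = Y t \<omega>"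
  shows "martingale M F Y"
  unfolding martingale_def adapted_def
proof (intro conjI allI impI)
  fix t :: real assume "0 \<le> t"
  then have "space (F t) = space M"
    using filtration_subalgebra[OF F] by (simp add: subalgebra_def)
  moreover have "X t \<in> borel_measurable (F t)"
    using X \<open>0 \<le> t\<close> by (simp add: martingale_def adapted_def)
  ultimately show "Y t \<in> borel_measurable (F t)"
    using \<open>0 \<le> t\<close> eq measurable_cong[of "F t" "X t" "Y t"] by simp
  have "integrable M (X t)"
    using X \<open>0 \<le> t\<close> unfolding martingale_def by blast
  then show "integrable M (Y t)"
    using \<open>0 \<le> t\<close> eq by (metis Bochner_Integration.integrable_cong)
next
  fix s t :: real assume st: "0 \<le> s \<and> s \<le> t"
  then have "subalgebra M (F s)" "subalgebra (F t) (F s)"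
    by (auto intro: filtration_subalgebra[OF F] filtration_subalgebra_mono[OF F])
  interpret finite_measure_subalgebra M "F s" by standard fact
  have "X t \<in> borel_measurable M"
    using X st unfolding martingale_def by (meson borel_measurable_integrable order_trans)
  moreover have "Y t \<in> borel_measurable M"
    using calculation eq st measurable_cong[of M "X t" "Y t"] by simp
  ultimately have "AE \<omega> in M. real_cond_exp M (F s) (Y t) \<omega> = real_cond_exp M (F s) (X t) \<omega>"
    using eq st by (intro real_cond_exp_cong) auto
  moreover have "AE \<omega> in M. real_cond_exp M (F s) (X t) \<omega> = X s \<omega>"
    using X st by (simp add: martingale_def)
  ultimately show "AE \<omega> in M. real_cond_exp M (F s) (Y t) \<omega> = Y s \<omega>"
    using eq st by auto
qed

definition compensated_survival ::
    "('i \<Rightarrow> real \<Rightarrow> 'a \<Rightarrow> real) \<Rightarrow> ('i set \<Rightarrow> real \<Rightarrow> real) \<Rightarrow> 'i set \<Rightarrow> real \<Rightarrow> 'a \<Rightarrow> real" where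
  "compensated_survival K \<Lambda> A t \<omega> = exp (\<Lambda> A t - (\<Sum>j\<in>A. K j t \<omega>))"

lemma compensated_survival_empty: "\<Lambda> {} t = 0 \<Longrightarrow> compensated_survival K \<Lambda> {} t \<omega> = 1"
  by (simp add: compensated_survival_def)

lemma compensated_survival_insert:
  assumes "finite A" "j \<notin> A"
  shows "exp (- K j t \<omega>) * compensated_survival K \<Lambda> A t \<omega>
    = compensated_survival K \<Lambda> (insert j A) t \<omega> * exp (\<Lambda> A t - \<Lambda> (insert j A) t)"
  using assms by (simp add: compensated_survival_def exp_add[symmetric] algebra_simps)

lemma (in finite_measure) integrable_exp_neg_sum:
  fixes f :: "'i \<Rightarrow> 'a \<Rightarrow> real"
  assumes "\<And>i. i \<in> I \<Longrightarrow> f i \<in> borel_measurable M"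
    and "\<And>i x. i \<in> I \<Longrightarrow> x \<in> space M \<Longrightarrow> 0 \<le> f i x"
  shows "integrable M (\<lambda>x. exp (- (\<Sum>i\<in>I. f i x)))"
proof (rule integrable_const_bound[where B=1])
  show "(\<lambda>x. exp (- (\<Sum>i\<in>I. f i x))) \<in> borel_measurable M"
    using assms(1) by measurable
  show "AE x in M. norm (exp (- (\<Sum>i\<in>I. f i x))) \<le> 1"
    using assms(2) by (auto intro!: sum_nonneg)
qed

lemma (in prob_space) real_cond_exp_tower_cong:
  assumes G: "subalgebra M G" and H: "subalgebra G H"
    and f: "integrable M f" and g: "g \<in> borel_measurable M"
    and cond_f: "AE \<omega> in M. real_cond_exp M G f \<omega> = g \<omega>"
  shows "AE \<omega> in M. real_cond_exp M H f \<omega> = real_cond_exp M H g \<omega>"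
proof -
  have "subalgebra M H"
    using G H by (auto simp: subalgebra_def)
  then interpret H': finite_measure_subalgebra M H
    by unfold_locales (simp add: subalgebra_def)
  have "AE \<omega> in M. real_cond_exp M H (real_cond_exp M G f) \<omega> = real_cond_exp M H f \<omega>"
    by (rule H'.real_cond_exp_nested_subalg[OF G H f])
  moreover have "AE \<omega> in M. real_cond_exp M H (real_cond_exp M G f) \<omega> = real_cond_exp M H g \<omega>"
    using cond_f g by (intro H'.real_cond_exp_cong) (auto intro: borel_measurable_cond_exp2)
  ultimately show ?thesis
    by eventually_elim simp
qed

lemma (in prob_space) real_cond_exp_tower_mult:
  assumes G: "subalgebra M G" and H: "subalgebra G H"
    and X: "X \<in> borel_measurable G" and Y: "Y \<in> borel_measurable M"
    and XY: "integrable M (\<lambda>\<omega>. X \<omega> * Y \<omega>)"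
  shows "AE \<omega> in M. real_cond_exp M H (\<lambda>\<omega>. X \<omega> * Y \<omega>) \<omega>
    = real_cond_exp M H (\<lambda>\<omega>. X \<omega> * real_cond_exp M G Y \<omega>) \<omega>"
proof -
  interpret G': finite_measure_subalgebra M G by standard (fact G)
  show ?thesis
    using measurable_from_subalg[OF G X]
    by (intro real_cond_exp_tower_cong[OF G H XY] G'.real_cond_exp_mult[OF X Y XY]) auto
qed

lemma (in sigma_finite_subalgebra) real_cond_exp_charact_nn_integral:
  assumes eq: "\<And>A. A \<in> sets F \<Longrightarrow>
      (\<integral>\<^sup>+x. indicator A x * ennreal (f x) \<partial>M) = (\<integral>\<^sup>+x. indicator A x * ennreal (g x) \<partial>M)"
    and f: "integrable M f" "\<And>x. x \<in> space M \<Longrightarrow> 0 \<le> f x"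
    and g: "integrable M g" "\<And>x. x \<in> space M \<Longrightarrow> 0 \<le> g x" "g \<in> borel_measurable F"
  shows "AE x in M. real_cond_exp M F f x = g x"
proof (rule real_cond_exp_charact)
  fix A assume A: "A \<in> sets F"
  then have "A \<in> sets M"
    using subalg by (auto simp: subalgebra_def)
  then have "(\<integral>x\<in>A. h x \<partial>M) = enn2real (\<integral>\<^sup>+x. indicator A x * ennreal (h x) \<partial>M)"
    if "integrable M h" "\<And>x. x \<in> space M \<Longrightarrow> 0 \<le> h x" for h
    using that by (simp add: set_lebesgue_integral_def integral_eq_nn_integral indicator_mult_ennreal)
  then show "(\<integral>x\<in>A. f x \<partial>M) = (\<integral>x\<in>A. g x \<partial>M)"
    using eq[OF A] f g by simp
qed (use f g in auto)

lemma (in prob_space) indep_sets_reindex: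
  assumes inj: "inj_on f I" and indep: "indep_sets E (f ` I)"
  shows "indep_sets (\<lambda>i. E (f i)) I"
  unfolding indep_sets_def
proof (intro conjI ballI allI impI)
  show "E (f i) \<subseteq> events" if "i \<in> I" for i
    using indep that by (auto simp: indep_sets_def)
next
  fix J A assume J: "J \<subseteq> I" "J \<noteq> {}" "finite J" and A: "A \<in> Pi J (\<lambda>i. E (f i))"
  have inj_J: "inj_on f J"
    using inj J(1) inj_on_subset by blast
  define B where "B j = A (the_inv_into J f j)" for j
  have B_f: "B (f i) = A i" if "i \<in> J" for i
    using the_inv_into_f_f[OF inj_J that] by (simp add: B_def)
  have "prob (\<Inter>j\<in>f ` J. B j) = (\<Prod>j\<in>f ` J. prob (B j))"
    by (rule indep_setsD[OF indep]) (use J A B_f in auto)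
  then show "prob (\<Inter>i\<in>J. A i) = (\<Prod>i\<in>J. prob (A i))"
    using inj_J B_f by (simp add: prod.reindex image_image cong: INF_cong)
qed

lemma Int_stable_vimage: "Int_stable {f -` B \<inter> S | B. B \<in> sets N}"
proof (rule Int_stableI, clarify)
  fix A B assume "A \<in> sets N" "B \<in> sets N"
  then show "\<exists>C. f -` A \<inter> S \<inter> (f -` B \<inter> S) = f -` C \<inter> S \<and> C \<in> sets N"
    by (intro exI[of _ "A \<inter> B"]) auto
qed

lemma measurable_restrict_sigma_vimage:
  assumes X: "\<And>i. i \<in> I \<Longrightarrow> X i \<in> \<Omega> \<rightarrow> space (M' i)"
  shows "(\<lambda>\<omega>. \<lambda>i\<in>I. X i \<omega>) \<in> measurable (sigma \<Omega> (\<Union>i\<in>I. {X i -` B \<inter> \<Omega> | B. B \<in> sets (M' i)})) (PiM I M')"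
proof -
  let ?G = "\<Union>i\<in>I. {X i -` B \<inter> \<Omega> | B. B \<in> sets (M' i)}"
  have G_Pow: "?G \<subseteq> Pow \<Omega>" by auto
  have "X i \<in> measurable (sigma \<Omega> ?G) (M' i)" if "i \<in> I" for i
  proof (rule measurableI)
    show "X i \<omega> \<in> space (M' i)" if "\<omega> \<in> space (sigma \<Omega> ?G)" for \<omega>
      using that X[OF \<open>i \<in> I\<close>] by (auto simp: space_measure_of_conv)
    show "X i -` B \<inter> space (sigma \<Omega> ?G) \<in> sets (sigma \<Omega> ?G)" if "B \<in> sets (M' i)" for B
      using that \<open>i \<in> I\<close> G_Pow by (auto simp: space_measure_of_conv)
  qed
  then show ?thesis
    by (rule measurable_restrict)
qed

lemma (in prob_space) indep_set_subalgebra_restrict: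
  assumes N: "subalgebra M N"
    and indep: "indep_sets (\<lambda>j. case j of None \<Rightarrow> sets N
                   | Some i \<Rightarrow> {\<Theta> i -` B \<inter> space M | B. B \<in> sets (M' i)}) (insert None (Some ` I))"
    and \<Theta>: "\<And>i. i \<in> I \<Longrightarrow> \<Theta> i \<in> measurable M (M' i)"
  shows "indep_set (sets N) (sigma_sets (space M) {(\<lambda>\<omega>. \<lambda>i\<in>I. \<Theta> i \<omega>) -` A \<inter> space M | A. A \<in> sets (PiM I M')})"
proof -
  let ?E = "\<lambda>j. case j of None \<Rightarrow> sets N | Some i \<Rightarrow> {\<Theta> i -` B \<inter> space M | B. B \<in> sets (M' i)}"
  let ?G = "\<Union>i\<in>I. {\<Theta> i -` B \<inter> space M | B. B \<in> sets (M' i)}"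
  have collected: "indep_sets (\<lambda>b. sigma_sets (space M) (\<Union>j\<in>case_bool {None} (Some ` I) b. ?E j)) UNIV"
  proof (rule indep_sets_collect_sigma)
    show "indep_sets ?E (\<Union>b. case_bool {None} (Some ` I) b)"
      using indep by (simp add: UNIV_bool Un_commute)
    show "Int_stable (?E j)" for j
      by (cases j) (auto simp: Int_stable_vimage sets.Int_stable)
    show "disjoint_family_on (case_bool {None} (Some ` I)) UNIV"
      by (auto simp: disjoint_family_on_def split: bool.splits)
  qed
  have G_Pow: "?G \<subseteq> Pow (space M)" by auto
  have \<Theta>_G: "(\<lambda>\<omega>. \<lambda>i\<in>I. \<Theta> i \<omega>) \<in> measurable (sigma (space M) ?G) (PiM I M')"
    using \<Theta> by (intro measurable_restrict_sigma_vimage) (auto dest: measurable_space)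
  show ?thesis
    unfolding indep_set_def
  proof (rule indep_sets_mono_sets[OF collected])
    fix b :: bool
    have "sigma_sets (space M) {(\<lambda>\<omega>. \<lambda>i\<in>I. \<Theta> i \<omega>) -` A \<inter> space M | A. A \<in> sets (PiM I M')}
        \<subseteq> sigma_sets (space M) ?G"
      using measurable_sets[OF \<Theta>_G] G_Pow
      by (intro sigma_sets_mono) (auto simp: space_measure_of_conv)
    moreover have "sets N = sigma_sets (space M) (sets N)"
      using N sets.sigma_sets_eq[of N] by (simp add: subalgebra_def)
    ultimately show "case_bool (sets N)
        (sigma_sets (space M) {(\<lambda>\<omega>. \<lambda>i\<in>I. \<Theta> i \<omega>) -` A \<inter> space M | A. A \<in> sets (PiM I M')}) b
      \<subseteq> sigma_sets (space M) (\<Union>j\<in>case_bool {None} (Some ` I) b. ?E j)"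
      by (cases b) simp_all
  qed
qed

lemma measurable_Pair_restr_to_subalg:
  assumes N: "subalgebra M N" and Y: "Y \<in> measurable M T"
  shows "(\<lambda>\<omega>. (\<omega>, Y \<omega>)) \<in> measurable M (restr_to_subalg M N \<Otimes>\<^sub>M distr M T Y)"
proof -
  have "(\<lambda>\<omega>. \<omega>) \<in> measurable M (restr_to_subalg M N)"
    using N by (auto simp: measurable_def sets_restr_to_subalg space_restr_to_subalg subalgebra_def
        dest: sets.sets_into_space)
  then show ?thesis
    using Y by (simp add: measurable_Pair)
qed

(* restr_to_subalg M N is M restricted to the sigma-algebra N, so that N can be a factor of a
   product measure. *)
lemma (in prob_space) distr_pair_indep_subalgebra:
  assumes N: "subalgebra M N" and Y: "Y \<in> measurable M T"
    and indep: "indep_set (sets N) (sigma_sets (space M) {Y -` A \<inter> space M | A. A \<in> sets T})"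
  shows "distr M (restr_to_subalg M N \<Otimes>\<^sub>M distr M T Y) (\<lambda>\<omega>. (\<omega>, Y \<omega>))
    = restr_to_subalg M N \<Otimes>\<^sub>M distr M T Y"
proof (rule pair_measure_eqI[symmetric])
  let ?N = "restr_to_subalg M N" and ?T = "distr M T Y"
  interpret N': prob_space ?N
    using prob_space_restr_to_subalg[OF N prob_space_axioms] .
  interpret T': prob_space ?T
    using prob_space_distr[OF Y] .
  show "sigma_finite_measure ?N" "sigma_finite_measure ?T" ..
  have sets_N: "sets ?N = sets N"
    using sets_restr_to_subalg[OF N] .
  fix A B assume "A \<in> sets ?N" "B \<in> sets ?T"
  then have A: "A \<in> sets N" and B: "B \<in> sets T" by (simp_all add: sets_N)
  then have A_M: "A \<in> events" using N by (auto simp: subalgebra_def)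
  have "(\<lambda>\<omega>. (\<omega>, Y \<omega>)) -` (A \<times> B) \<inter> space M = A \<inter> (Y -` B \<inter> space M)"
    using A_M sets.sets_into_space by blast
  moreover have "A \<times> B \<in> sets (?N \<Otimes>\<^sub>M ?T)"
    using A B by (simp add: sets_N)
  ultimately have "emeasure (distr M (?N \<Otimes>\<^sub>M ?T) (\<lambda>\<omega>. (\<omega>, Y \<omega>))) (A \<times> B)
      = prob (A \<inter> (Y -` B \<inter> space M))"
    using measurable_Pair_restr_to_subalg[OF N Y] by (simp add: emeasure_distr emeasure_eq_measure)
  also have "\<dots> = prob A * prob (Y -` B \<inter> space M)"
    using A B by (intro arg_cong[where f=ennreal] indep_setD[OF indep]) auto
  also have "\<dots> = emeasure ?N A * emeasure ?T B"
    using A B Y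
    by (simp add: emeasure_restr_to_subalg[OF N] emeasure_distr emeasure_eq_measure ennreal_mult)
  finally show "emeasure ?N A * emeasure ?T B = emeasure (distr M (?N \<Otimes>\<^sub>M ?T) (\<lambda>\<omega>. (\<omega>, Y \<omega>))) (A \<times> B)"
    by (rule sym)
qed simp

lemma (in prob_space) nn_integral_indep_subalgebra:
  assumes N: "subalgebra M N" and Y: "Y \<in> measurable M T"
    and indep: "indep_set (sets N) (sigma_sets (space M) {Y -` A \<inter> space M | A. A \<in> sets T})"
    and g: "g \<in> borel_measurable (N \<Otimes>\<^sub>M T)"
  shows "(\<integral>\<^sup>+\<omega>. g (\<omega>, Y \<omega>) \<partial>M) = (\<integral>\<^sup>+\<omega>. \<integral>\<^sup>+y. g (\<omega>, y) \<partial>distr M T Y \<partial>M)"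
proof -
  let ?N = "restr_to_subalg M N" and ?T = "distr M T Y"
  interpret T': prob_space ?T
    using prob_space_distr[OF Y] .
  have "sets (N \<Otimes>\<^sub>M ?T) = sets (N \<Otimes>\<^sub>M T)" "sets (?N \<Otimes>\<^sub>M ?T) = sets (N \<Otimes>\<^sub>M T)"
    by (intro sets_pair_measure_cong; simp add: sets_restr_to_subalg[OF N])+
  then have g_NT: "g \<in> borel_measurable (N \<Otimes>\<^sub>M ?T)" and g': "g \<in> borel_measurable (?N \<Otimes>\<^sub>M ?T)"
    using g measurable_cong_sets[OF _ refl] by blast+
  have "(\<integral>\<^sup>+\<omega>. g (\<omega>, Y \<omega>) \<partial>M) = (\<integral>\<^sup>+p. g p \<partial>distr M (?N \<Otimes>\<^sub>M ?T) (\<lambda>\<omega>. (\<omega>, Y \<omega>)))"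
    using measurable_Pair_restr_to_subalg[OF N Y] g' by (simp add: nn_integral_distr)
  also have "\<dots> = (\<integral>\<^sup>+p. g p \<partial>(?N \<Otimes>\<^sub>M ?T))"
    by (simp only: distr_pair_indep_subalgebra[OF N Y indep])
  also have "\<dots> = (\<integral>\<^sup>+\<omega>. \<integral>\<^sup>+y. g (\<omega>, y) \<partial>?T \<partial>?N)"
    by (rule T'.nn_integral_fst[symmetric, OF g'])
  also have "\<dots> = (\<integral>\<^sup>+\<omega>. \<integral>\<^sup>+y. g (\<omega>, y) \<partial>?T \<partial>M)"
    by (rule nn_integral_subalgebra2[OF N T'.borel_measurable_nn_integral_fst[OF g_NT]])
  finally show ?thesis .
qed

lemma (in prob_space) prob_exponentials_greater:
  assumes "finite I" and indep: "indep_vars (\<lambda>_. borel) \<Theta> I"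
    and exp: "\<And>i. i \<in> I \<Longrightarrow> distributed M lborel (\<Theta> i) (exponential_density l)" and "0 < l"
    and c: "\<And>i. i \<in> I \<Longrightarrow> 0 \<le> c i"
  shows "prob {\<omega>\<in>space M. \<forall>i\<in>I. c i < \<Theta> i \<omega>} = exp (- l * (\<Sum>i\<in>I. c i))"
proof (cases "I = {}")
  case True
  then show ?thesis by (simp add: prob_space)
next
  case False
  have "{\<omega>\<in>space M. \<forall>i\<in>I. c i < \<Theta> i \<omega>} = (\<Inter>i\<in>I. \<Theta> i -` {c i<..} \<inter> space M)"
    using False by auto
  then have "prob {\<omega>\<in>space M. \<forall>i\<in>I. c i < \<Theta> i \<omega>} = (\<Prod>i\<in>I. prob (\<Theta> i -` {c i<..} \<inter> space M))"
    using indep_varsD_finite[OF indep False \<open>finite I\<close>] by simp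
  also have "\<dots> = (\<Prod>i\<in>I. exp (- c i * l))"
  proof (rule prod.cong[OF refl])
    fix i assume "i \<in> I"
    have "\<Theta> i -` {c i<..} \<inter> space M = {\<omega>\<in>space M. c i < \<Theta> i \<omega>}" by auto
    then show "prob (\<Theta> i -` {c i<..} \<inter> space M) = exp (- c i * l)"
      using exponential_distributedD_gt[OF exp c \<open>0 < l\<close>] \<open>i \<in> I\<close> by simp
  qed
  also have "\<dots> = exp (- l * (\<Sum>i\<in>I. c i))"
    using \<open>finite I\<close> by (simp add: exp_sum[symmetric] sum_distrib_left mult.commute)
  finally show ?thesis .
qed

lemma (in prob_space) indep_vars_of_indep_sets_Some:
  assumes indep: "indep_sets (\<lambda>j. case j of None \<Rightarrow> A
                   | Some i \<Rightarrow> {X i -` B \<inter> space M | B. B \<in> sets (M' i)}) (insert None (Some ` I))"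
    and X: "\<And>i. i \<in> I \<Longrightarrow> X i \<in> measurable M (M' i)"
  shows "indep_vars M' X I"
  unfolding indep_vars_def2
proof
  have "indep_sets (\<lambda>j. case j of None \<Rightarrow> A
      | Some i \<Rightarrow> {X i -` B \<inter> space M | B. B \<in> sets (M' i)}) (Some ` I)"
    by (rule indep_sets_mono_index[OF _ indep]) auto
  from indep_sets_reindex[OF _ this]
  show "indep_sets (\<lambda>i. {X i -` B \<inter> space M | B. B \<in> sets (M' i)}) I"
    by (simp add: inj_on_def)
qed (use X in simp)

lemma (in prob_space) nn_integral_indicator_exponentials_greater:
  fixes Y \<Theta> :: "'i \<Rightarrow> 'a \<Rightarrow> real"
  assumes N: "subalgebra M N" and I: "finite I"
    and indep: "indep_sets (\<lambda>j. case j of None \<Rightarrow> sets N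
                   | Some i \<Rightarrow> {\<Theta> i -` B \<inter> space M | B. B \<in> sets borel}) (insert None (Some ` I))"
    and exp: "\<And>i. i \<in> I \<Longrightarrow> distributed M lborel (\<Theta> i) (exponential_density l)" and "0 < l"
    and Y: "\<And>i. i \<in> I \<Longrightarrow> Y i \<in> borel_measurable N"
    and Y_nonneg: "\<And>i \<omega>. i \<in> I \<Longrightarrow> \<omega> \<in> space M \<Longrightarrow> 0 \<le> Y i \<omega>"
    and G: "G \<in> sets N"
  shows "(\<integral>\<^sup>+\<omega>. indicator G \<omega> * ennreal (indicator {\<omega>\<in>space M. \<forall>i\<in>I. Y i \<omega> < \<Theta> i \<omega>} \<omega>) \<partial>M)
    = (\<integral>\<^sup>+\<omega>. indicator G \<omega> * ennreal (exp (- l * (\<Sum>i\<in>I. Y i \<omega>))) \<partial>M)"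
proof -
  let ?\<Theta> = "\<lambda>\<omega>. \<lambda>i\<in>I. \<Theta> i \<omega>" and ?P = "PiM I (\<lambda>_. borel :: real measure)"
  let ?H = "{p \<in> space (N \<Otimes>\<^sub>M ?P). fst p \<in> G \<and> (\<forall>i\<in>I. Y i (fst p) < snd p i)}"
  have \<Theta>_M[measurable]: "\<Theta> i \<in> borel_measurable M" if "i \<in> I" for i
    using exp[OF that] by (metis distributed_measurable measurable_lborel1)
  have \<Theta>_P: "?\<Theta> \<in> measurable M ?P"
    by (rule measurable_restrict) simp
  have space_N: "space N = space M"
    using N by (simp add: subalgebra_def)
  have H: "?H \<in> sets (N \<Otimes>\<^sub>M ?P)"
    using G I Y by measurable
  have "(\<integral>\<^sup>+\<omega>. indicator G \<omega> * ennreal (indicator {\<omega>\<in>space M. \<forall>i\<in>I. Y i \<omega> < \<Theta> i \<omega>} \<omega>) \<partial>M)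
      = (\<integral>\<^sup>+\<omega>. indicator ?H (\<omega>, ?\<Theta> \<omega>) \<partial>M)"
    using space_N by (intro nn_integral_cong) (auto simp: indicator_def space_pair_measure space_PiM)
  also have "\<dots> = (\<integral>\<^sup>+\<omega>. \<integral>\<^sup>+\<theta>. indicator ?H (\<omega>, \<theta>) \<partial>distr M ?P ?\<Theta> \<partial>M)"
    using H by (intro nn_integral_indep_subalgebra[OF N \<Theta>_P] indep_set_subalgebra_restrict[OF N indep]) auto
  also have "\<dots> = (\<integral>\<^sup>+\<omega>. indicator G \<omega> * ennreal (exp (- l * (\<Sum>i\<in>I. Y i \<omega>))) \<partial>M)"
  proof (rule nn_integral_cong)
    fix \<omega> assume \<omega>: "\<omega> \<in> space M"
    let ?E\<omega> = "{\<omega>'\<in>space M. \<forall>i\<in>I. Y i \<omega> < \<Theta> i \<omega>'}"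
    have "(\<lambda>\<theta>. indicator ?H (\<omega>, \<theta>)) \<in> borel_measurable (distr M ?P ?\<Theta>)"
      using measurable_Pair2[OF borel_measurable_indicator[OF H], of \<omega>] \<omega> space_N by simp
    then have "(\<integral>\<^sup>+\<theta>. indicator ?H (\<omega>, \<theta>) \<partial>distr M ?P ?\<Theta>) = (\<integral>\<^sup>+\<omega>'. indicator ?H (\<omega>, ?\<Theta> \<omega>') \<partial>M)"
      by (rule nn_integral_distr[OF \<Theta>_P])
    also have "\<dots> = (\<integral>\<^sup>+\<omega>'. indicator G \<omega> * indicator ?E\<omega> \<omega>' \<partial>M)"
      using \<omega> space_N by (intro nn_integral_cong) (auto simp: indicator_def space_pair_measure space_PiM)
    also have "\<dots> = indicator G \<omega> * emeasure M ?E\<omega>"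
      using I by (intro nn_integral_cmult_indicator) measurable
    also have "\<dots> = indicator G \<omega> * ennreal (exp (- l * (\<Sum>i\<in>I. Y i \<omega>)))"
      using prob_exponentials_greater[OF I indep_vars_of_indep_sets_Some[OF indep] exp \<open>0 < l\<close>]
        Y_nonneg \<omega> by (simp add: emeasure_eq_measure)
    finally show "(\<integral>\<^sup>+\<theta>. indicator ?H (\<omega>, \<theta>) \<partial>distr M ?P ?\<Theta>)
        = indicator G \<omega> * ennreal (exp (- l * (\<Sum>i\<in>I. Y i \<omega>)))" .
  qed
  finally show ?thesis .
qed

lemma (in prob_space) real_cond_exp_exponentials_greater:
  fixes Y \<Theta> :: "'i \<Rightarrow> 'a \<Rightarrow> real"
  assumes N: "subalgebra M N" and I: "finite I"
    and indep: "indep_sets (\<lambda>j. case j of None \<Rightarrow> sets N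
                   | Some i \<Rightarrow> {\<Theta> i -` B \<inter> space M | B. B \<in> sets borel}) (insert None (Some ` I))"
    and exp: "\<And>i. i \<in> I \<Longrightarrow> distributed M lborel (\<Theta> i) (exponential_density l)" and "0 < l"
    and Y: "\<And>i. i \<in> I \<Longrightarrow> Y i \<in> borel_measurable N"
    and Y_nonneg: "\<And>i \<omega>. i \<in> I \<Longrightarrow> \<omega> \<in> space M \<Longrightarrow> 0 \<le> Y i \<omega>"
  shows "AE \<omega> in M. real_cond_exp M N (indicator {\<omega>\<in>space M. \<forall>i\<in>I. Y i \<omega> < \<Theta> i \<omega>}) \<omega>
           = exp (- l * (\<Sum>i\<in>I. Y i \<omega>))"
proof -
  interpret N': finite_measure_subalgebra M N by standard (fact N)
  have [measurable]: "\<Theta> i \<in> borel_measurable M" "Y i \<in> borel_measurable M" if "i \<in> I" for i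
    using exp[OF that] measurable_from_subalg[OF N Y[OF that]]
    by (auto dest: distributed_measurable simp: measurable_lborel1)
  have W_N: "(\<lambda>\<omega>. exp (- l * (\<Sum>i\<in>I. Y i \<omega>))) \<in> borel_measurable N"
    using Y by measurable
  have W_bounds: "0 \<le> exp (- l * (\<Sum>i\<in>I. Y i \<omega>)) \<and> exp (- l * (\<Sum>i\<in>I. Y i \<omega>)) \<le> 1"
    if "\<omega> \<in> space M" for \<omega>
    using Y_nonneg that \<open>0 < l\<close> by (simp add: sum_nonneg)
  have "{\<omega>\<in>space M. \<forall>i\<in>I. Y i \<omega> < \<Theta> i \<omega>} \<in> events"
    using I by measurable
  with W_N W_bounds measurable_from_subalg[OF N W_N] show ?thesis
    by (intro N'.real_cond_exp_charact_nn_integral nn_integral_indicator_exponentials_greater[OF N I indep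
          exp \<open>0 < l\<close> Y Y_nonneg] integrable_const_bound[where B=1]) (auto simp: emeasure_eq_measure)
qed

lemma (in prob_space) real_cond_exp_cox_survival:
  fixes K :: "'i \<Rightarrow> real \<Rightarrow> 'a \<Rightarrow> real" and \<Theta> :: "'i \<Rightarrow> 'a \<Rightarrow> real" and r :: "'i \<Rightarrow> real"
  assumes F: "filtration M F" and I: "finite I"
    and indep: "indep_sets (\<lambda>j. case j of None \<Rightarrow> (\<Union>t\<in>{0..}. sets (F t))
                   | Some i \<Rightarrow> {\<Theta> i -` B \<inter> space M | B. B \<in> sets borel}) (insert None (Some ` I))"
    and exp: "\<And>i. i \<in> I \<Longrightarrow> distributed M lborel (\<Theta> i) (exponential_density 1)"
    and K_adapted: "\<And>i. i \<in> I \<Longrightarrow> adapted F (K i)"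
    and K_nonneg: "\<And>i t \<omega>. i \<in> I \<Longrightarrow> 0 \<le> t \<Longrightarrow> \<omega> \<in> space M \<Longrightarrow> 0 \<le> K i t \<omega>"
    and "0 \<le> t" and t_le: "\<And>i. i \<in> I \<Longrightarrow> t \<le> r i"
  shows "AE \<omega> in M. real_cond_exp M (F t) (indicator {\<omega>\<in>space M. \<forall>i\<in>I. K i (r i) \<omega> < \<Theta> i \<omega>}) \<omega>
           = real_cond_exp M (F t) (\<lambda>\<omega>. exp (- (\<Sum>i\<in>I. K i (r i) \<omega>))) \<omega>"
proof -
  let ?E = "{\<omega>\<in>space M. \<forall>i\<in>I. K i (r i) \<omega> < \<Theta> i \<omega>}"
  let ?W = "\<lambda>\<omega>. exp (- (\<Sum>i\<in>I. K i (r i) \<omega>))"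
  define T where "T = Max (insert t (r ` I))"
  have t_T: "t \<le> T" and r_T: "\<And>i. i \<in> I \<Longrightarrow> r i \<le> T"
    unfolding T_def using I by (intro Max_ge; simp)+
  have r_nonneg: "0 \<le> r i" if "i \<in> I" for i
    using \<open>0 \<le> t\<close> t_le[OF that] by simp
  have sub_T: "subalgebra M (F T)" and sub_t: "subalgebra (F T) (F t)"
    using \<open>0 \<le> t\<close> t_T by (auto intro: filtration_subalgebra[OF F] filtration_subalgebra_mono[OF F])
  have K_T: "K i (r i) \<in> borel_measurable (F T)" if "i \<in> I" for i
  proof -
    have "K i (r i) \<in> borel_measurable (F (r i))"
      using K_adapted[OF that] r_nonneg[OF that] by (simp add: adapted_def)
    moreover have "subalgebra (F T) (F (r i))"
      using filtration_subalgebra_mono[OF F r_nonneg[OF that] r_T[OF that]] .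
    ultimately show ?thesis
      using measurable_from_subalg by blast
  qed
  have "0 \<le> T" using \<open>0 \<le> t\<close> t_T by simp
  then have "indep_sets (\<lambda>j. case j of None \<Rightarrow> sets (F T)
      | Some i \<Rightarrow> {\<Theta> i -` B \<inter> space M | B. B \<in> sets borel}) (insert None (Some ` I))"
    by (intro indep_sets_mono_sets[OF indep]) (auto split: option.splits)
  then have "AE \<omega> in M. real_cond_exp M (F T) (indicator ?E) \<omega> = exp (- 1 * (\<Sum>i\<in>I. K i (r i) \<omega>))"
    using K_T K_nonneg r_nonneg by (intro real_cond_exp_exponentials_greater[OF sub_T I _ exp]) auto
  then have cond_T: "AE \<omega> in M. real_cond_exp M (F T) (indicator ?E) \<omega> = ?W \<omega>"
    by simp
  have [measurable]: "K i (r i) \<in> borel_measurable M" "\<Theta> i \<in> borel_measurable M" if "i \<in> I" for i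
    using measurable_from_subalg[OF sub_T K_T[OF that]] exp[OF that]
    by (auto dest: distributed_measurable simp: measurable_lborel1)
  have "?E \<in> events"
    using I by measurable
  moreover have "?W \<in> borel_measurable M"
    by measurable
  ultimately show ?thesis
    using cond_T by (intro real_cond_exp_tower_cong[OF sub_T sub_t]) (auto simp: emeasure_eq_measure)
qed

lemma (in prob_space) real_cond_exp_hit_times:
  fixes K :: "'i \<Rightarrow> real \<Rightarrow> 'a \<Rightarrow> real" and \<Theta> :: "'i \<Rightarrow> 'a \<Rightarrow> real" and r :: "'i \<Rightarrow> real"
  assumes F: "filtration M F" and I: "finite I"
    and indep: "indep_sets (\<lambda>j. case j of None \<Rightarrow> (\<Union>t\<in>{0..}. sets (F t))
                   | Some i \<Rightarrow> {\<Theta> i -` B \<inter> space M | B. B \<in> sets borel}) (insert None (Some ` I))"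
    and exp: "\<And>i. i \<in> I \<Longrightarrow> distributed M lborel (\<Theta> i) (exponential_density 1)"
    and K_adapted: "\<And>i. i \<in> I \<Longrightarrow> adapted F (K i)"
    and K_cadlag: "\<And>i. i \<in> I \<Longrightarrow> cadlag M (K i)"
    and K_mono: "\<And>i \<omega>. i \<in> I \<Longrightarrow> \<omega> \<in> space M \<Longrightarrow> mono_on {0..} (\<lambda>t. K i t \<omega>)"
    and K_zero: "\<And>i \<omega>. i \<in> I \<Longrightarrow> \<omega> \<in> space M \<Longrightarrow> K i 0 \<omega> = 0"
    and "0 \<le> t" and t_le: "\<And>i. i \<in> I \<Longrightarrow> t \<le> r i"
  shows "AE \<omega> in M. real_cond_exp M (F t)
      (indicator {\<omega>\<in>space M. \<forall>i\<in>I. hit_time (K i) (\<Theta> i) \<omega> > ereal (r i)}) \<omega>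
    = real_cond_exp M (F t) (\<lambda>\<omega>. exp (- (\<Sum>i\<in>I. K i (r i) \<omega>))) \<omega>"
proof -
  have r_nonneg: "0 \<le> r i" if "i \<in> I" for i
    using \<open>0 \<le> t\<close> t_le[OF that] by simp
  have "ereal (r i) < hit_time (K i) (\<Theta> i) \<omega> \<longleftrightarrow> K i (r i) \<omega> < \<Theta> i \<omega>"
    if "i \<in> I" "\<omega> \<in> space M" for i \<omega>
    using K_cadlag[OF that(1)] that(2) r_nonneg[OF that(1)]
    by (intro hit_time_gt_iff K_mono[OF that]) (auto simp: cadlag_def)
  then have "{\<omega>\<in>space M. \<forall>i\<in>I. hit_time (K i) (\<Theta> i) \<omega> > ereal (r i)}
      = {\<omega>\<in>space M. \<forall>i\<in>I. K i (r i) \<omega> < \<Theta> i \<omega>}"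
    by auto
  moreover have "0 \<le> K i s \<omega>" if "i \<in> I" "0 \<le> s" "\<omega> \<in> space M" for i s \<omega>
    using mono_on_nonneg_of_zero[OF K_mono[OF that(1,3)] K_zero[OF that(1,3)] that(2)] .
  ultimately show ?thesis
    using real_cond_exp_cox_survival[where K=K and r=r, OF F I indep exp K_adapted _ \<open>0 \<le> t\<close> t_le]
    by simp
qed

lemma (in prob_space) real_cond_exp_compensated_survival_step:
  assumes F: "filtration M F" and "0 \<le> s" "s \<le> u"
    and A: "finite A" "j \<notin> A"
    and K: "K j u \<in> borel_measurable (F u)"
    and V: "V \<in> borel_measurable M" "integrable M (\<lambda>\<omega>. exp (- K j u \<omega>) * V \<omega>)"
    and mart: "martingale M F (compensated_survival K \<Lambda> (insert j A))"
    and cond_V: "AE \<omega> in M. real_cond_exp M (F u) V \<omega> = compensated_survival K \<Lambda> A u \<omega> * c"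
  shows "AE \<omega> in M. real_cond_exp M (F s) (\<lambda>\<omega>. exp (- K j u \<omega>) * V \<omega>) \<omega>
    = compensated_survival K \<Lambda> (insert j A) s \<omega> * (exp (\<Lambda> A u - \<Lambda> (insert j A) u) * c)"
proof -
  let ?Z = "compensated_survival K \<Lambda> (insert j A)" and ?c = "exp (\<Lambda> A u - \<Lambda> (insert j A) u) * c"
  have sub_u: "subalgebra M (F u)" and sub_s: "subalgebra (F u) (F s)"
    using \<open>0 \<le> s\<close> \<open>s \<le> u\<close> by (auto intro: filtration_subalgebra[OF F] filtration_subalgebra_mono[OF F])
  interpret Fs: finite_measure_subalgebra M "F s"
    by standard (rule filtration_subalgebra[OF F \<open>0 \<le> s\<close>])
  have "0 \<le> u" using \<open>0 \<le> s\<close> \<open>s \<le> u\<close> by simp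
  then have Z_u: "?Z u \<in> borel_measurable M" "integrable M (?Z u)"
    using mart measurable_from_subalg[OF sub_u] unfolding martingale_def adapted_def by blast+
  have K_M: "K j u \<in> borel_measurable M"
    using measurable_from_subalg[OF sub_u K] .
  have "AE \<omega> in M. real_cond_exp M (F s) (\<lambda>\<omega>. exp (- K j u \<omega>) * V \<omega>) \<omega>
      = real_cond_exp M (F s) (\<lambda>\<omega>. exp (- K j u \<omega>) * real_cond_exp M (F u) V \<omega>) \<omega>"
    using K by (intro real_cond_exp_tower_mult[OF sub_u sub_s _ V]) measurable
  moreover have "AE \<omega> in M. real_cond_exp M (F s) (\<lambda>\<omega>. exp (- K j u \<omega>) * real_cond_exp M (F u) V \<omega>) \<omega>
      = real_cond_exp M (F s) (\<lambda>\<omega>. ?c * ?Z u \<omega>) \<omega>"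
  proof (rule Fs.real_cond_exp_cong)
    show "AE \<omega> in M. exp (- K j u \<omega>) * real_cond_exp M (F u) V \<omega> = ?c * ?Z u \<omega>"
      using cond_V
    proof eventually_elim
      case (elim \<omega>)
      then have "exp (- K j u \<omega>) * real_cond_exp M (F u) V \<omega>
          = (exp (- K j u \<omega>) * compensated_survival K \<Lambda> A u \<omega>) * c"
        by simp
      then show ?case
        by (simp add: compensated_survival_insert[OF A])
    qed
  qed (use K_M Z_u in \<open>auto intro: borel_measurable_cond_exp2\<close>)
  moreover have "AE \<omega> in M. real_cond_exp M (F s) (\<lambda>\<omega>. ?c * ?Z u \<omega>) \<omega> = ?c * real_cond_exp M (F s) (?Z u) \<omega>"
    by (rule Fs.real_cond_exp_cmult[OF Z_u(2)])
  moreover have "AE \<omega> in M. real_cond_exp M (F s) (?Z u) \<omega> = ?Z s \<omega>"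
    using mart \<open>0 \<le> s\<close> \<open>s \<le> u\<close> by (simp add: martingale_def)
  ultimately show ?thesis
    by eventually_elim simp
qed

lemma (in prob_space) real_cond_exp_exp_neg_sum_sorted:
  fixes K :: "'i \<Rightarrow> real \<Rightarrow> 'a \<Rightarrow> real" and \<Lambda> :: "'i set \<Rightarrow> real \<Rightarrow> real"
    and \<sigma> :: "nat \<Rightarrow> 'i" and r :: "nat \<Rightarrow> real"
  assumes F: "filtration M F"
    and K_adapted: "\<And>k. k \<in> {m..n} \<Longrightarrow> adapted F (K (\<sigma> k))"
    and K_nonneg: "\<And>k t \<omega>. k \<in> {m..n} \<Longrightarrow> 0 \<le> t \<Longrightarrow> \<omega> \<in> space M \<Longrightarrow> 0 \<le> K (\<sigma> k) t \<omega>"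
    and \<Lambda>_empty: "\<And>t. \<Lambda> {} t = 0"
    and mart: "\<And>k. k \<in> {m..n} \<Longrightarrow> martingale M F (compensated_survival K \<Lambda> (\<sigma> ` {k..n}))"
    and inj: "inj_on \<sigma> {m..n}"
    and r_mono: "\<And>k l. m \<le> k \<Longrightarrow> k \<le> l \<Longrightarrow> l \<le> n \<Longrightarrow> r k \<le> r l"
    and s: "0 \<le> s" "\<And>k. k \<in> {m..n} \<Longrightarrow> s \<le> r k"
  shows "AE \<omega> in M. real_cond_exp M (F s) (\<lambda>\<omega>. exp (- (\<Sum>k=m..n. K (\<sigma> k) (r k) \<omega>))) \<omega>
    = compensated_survival K \<Lambda> (\<sigma> ` {m..n}) s \<omega> *
      exp (- (\<Sum>k=m..n. \<Lambda> (\<sigma> ` {k..n}) (r k) - \<Lambda> (\<sigma> ` {Suc k..n}) (r k)))"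
proof -
  let ?W = "\<lambda>k \<omega>. exp (- (\<Sum>j=k..n. K (\<sigma> j) (r j) \<omega>))"
  let ?C = "\<lambda>k. exp (- (\<Sum>j=k..n. \<Lambda> (\<sigma> ` {j..n}) (r j) - \<Lambda> (\<sigma> ` {Suc j..n}) (r j)))"
  let ?Z = "\<lambda>k. compensated_survival K \<Lambda> (\<sigma> ` {k..n})"
  have r_nonneg: "0 \<le> r j" if "j \<in> {m..n}" for j
    using s that by fastforce
  have K_F: "K (\<sigma> j) (r j) \<in> borel_measurable (F (r j))" if "j \<in> {m..n}" for j
    using K_adapted[OF that] r_nonneg[OF that] by (simp add: adapted_def)
  have K_M: "K (\<sigma> j) (r j) \<in> borel_measurable M" if "j \<in> {m..n}" for j
    using measurable_from_subalg[OF filtration_subalgebra[OF F r_nonneg[OF that]] K_F[OF that]] .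
  have W_int: "integrable M (?W k)" if "m \<le> k" for k
    using K_M K_nonneg r_nonneg that
    by (intro integrable_exp_neg_sum[where f="\<lambda>j. K (\<sigma> j) (r j)"]) auto
  have cond_1: "AE \<omega> in M. real_cond_exp M (F s) (\<lambda>_. 1) \<omega> = 1" if "0 \<le> s" for s
  proof -
    interpret Fs: finite_measure_subalgebra M "F s"
      by standard (rule filtration_subalgebra[OF F that])
    show ?thesis by (rule Fs.real_cond_exp_F_meas) auto
  qed
  have "\<forall>s. 0 \<le> s \<and> (\<forall>j\<in>{k..n}. s \<le> r j) \<longrightarrow>
      (AE \<omega> in M. real_cond_exp M (F s) (?W k) \<omega> = ?Z k s \<omega> * ?C k)" if "m \<le> k" "k \<le> Suc n" for k
    using that(2)
  proof (induction k rule: inc_induct)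
    case base
    show ?case
      using cond_1 by (simp add: compensated_survival_empty \<Lambda>_empty)
  next
    case (step j)
    then have j: "j \<in> {m..n}" and "m \<le> Suc j"
      using \<open>m \<le> k\<close> by auto
    have interval: "{j..n} = insert j {Suc j..n}"
      using j by auto
    have A: "\<sigma> ` {j..n} = insert (\<sigma> j) (\<sigma> ` {Suc j..n})" "\<sigma> j \<notin> \<sigma> ` {Suc j..n}"
      using inj_on_image_mem_iff[OF inj, of j "{Suc j..n}"] j by (auto simp: interval)
    have W_split: "?W j = (\<lambda>\<omega>. exp (- K (\<sigma> j) (r j) \<omega>) * ?W (Suc j) \<omega>)"
      by (simp add: interval exp_add[symmetric])
    have C_split: "?C j = exp (\<Lambda> (\<sigma> ` {Suc j..n}) (r j) - \<Lambda> (\<sigma> ` {j..n}) (r j)) * ?C (Suc j)"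
      by (simp add: interval exp_add[symmetric])
    show ?case
    proof (intro allI impI)
      fix s assume s_le: "0 \<le> s \<and> (\<forall>i\<in>{j..n}. s \<le> r i)"
      have "AE \<omega> in M. real_cond_exp M (F (r j)) (?W (Suc j)) \<omega> = ?Z (Suc j) (r j) \<omega> * ?C (Suc j)"
        using step.IH r_nonneg[OF j] r_mono j by auto
      then have "AE \<omega> in M. real_cond_exp M (F s) (\<lambda>\<omega>. exp (- K (\<sigma> j) (r j) \<omega>) * ?W (Suc j) \<omega>) \<omega>
          = ?Z j s \<omega> * (exp (\<Lambda> (\<sigma> ` {Suc j..n}) (r j) - \<Lambda> (\<sigma> ` {j..n}) (r j)) * ?C (Suc j))"
        unfolding A(1)
        using s_le j mart[OF j] W_int[of j] borel_measurable_integrable[OF W_int[OF \<open>m \<le> Suc j\<close>]]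
        by (intro real_cond_exp_compensated_survival_step[where K=K and j="\<sigma> j" and u="r j",
              OF F _ _ _ A(2) K_F[OF j]])
          (auto simp: A(1)[symmetric] W_split[symmetric])
      then show "AE \<omega> in M. real_cond_exp M (F s) (?W j) \<omega> = ?Z j s \<omega> * ?C j"
        by (simp only: W_split C_split)
    qed
  qed
  then show ?thesis
    using s cond_1 by (cases "m \<le> Suc n") (auto simp: compensated_survival_empty \<Lambda>_empty)
qed

lemma (in prob_space) real_cond_exp_exp_neg_sum_sorted_factorization:
  fixes K :: "'i \<Rightarrow> real \<Rightarrow> 'a \<Rightarrow> real" and \<Lambda> :: "'i set \<Rightarrow> real \<Rightarrow> real"
    and \<eta> :: "'i set \<Rightarrow> real \<Rightarrow> 'a \<Rightarrow> real" and \<sigma> :: "nat \<Rightarrow> 'i" and r :: "nat \<Rightarrow> real"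
  assumes F: "filtration M F" and "m \<le> n"
    and \<sigma>: "\<sigma> ` {m..n} \<subseteq> U" "inj_on \<sigma> {m..n}"
    and K_adapted: "\<And>i. i \<in> U \<Longrightarrow> adapted F (K i)"
    and K_mono: "\<And>i \<omega>. i \<in> U \<Longrightarrow> \<omega> \<in> space M \<Longrightarrow> mono_on {0..} (\<lambda>t. K i t \<omega>)"
    and K_zero: "\<And>i \<omega>. i \<in> U \<Longrightarrow> \<omega> \<in> space M \<Longrightarrow> K i 0 \<omega> = 0"
    and \<Lambda>_empty: "\<And>t. \<Lambda> {} t = 0"
    and \<eta>_mart: "\<And>J. J \<subseteq> U \<Longrightarrow> J \<noteq> {} \<Longrightarrow> martingale M F (\<eta> J)"
    and factor: "\<And>J t \<omega>. J \<subseteq> U \<Longrightarrow> J \<noteq> {} \<Longrightarrow> 0 \<le> t \<Longrightarrow> \<omega> \<in> space M \<Longrightarrow>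
      exp (- (\<Sum>j\<in>J. K j t \<omega>)) = \<eta> J t \<omega> * exp (- \<Lambda> J t)"
    and r_mono: "\<And>k l. m \<le> k \<Longrightarrow> k \<le> l \<Longrightarrow> l \<le> n \<Longrightarrow> r k \<le> r l"
    and s: "0 \<le> s" "\<And>k. k \<in> {m..n} \<Longrightarrow> s \<le> r k"
  shows "AE \<omega> in M. real_cond_exp M (F s) (\<lambda>\<omega>. exp (- (\<Sum>k=m..n. K (\<sigma> k) (r k) \<omega>))) \<omega>
    = \<eta> (\<sigma> ` {m..n}) s \<omega> *
      exp (- (\<Sum>k=m..n. \<Lambda> (\<sigma> ` {k..n}) (r k) - \<Lambda> (\<sigma> ` {Suc k..n}) (r k)))"
proof -
  have A_k: "\<sigma> ` {k..n} \<subseteq> U" "\<sigma> ` {k..n} \<noteq> {}" if "k \<in> {m..n}" for k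
    using that \<sigma>(1) by auto
  have \<eta>_eq: "\<eta> (\<sigma> ` {k..n}) t \<omega> = compensated_survival K \<Lambda> (\<sigma> ` {k..n}) t \<omega>"
    if "k \<in> {m..n}" "0 \<le> t" "\<omega> \<in> space M" for k t \<omega>
    using factor[OF A_k[OF that(1)] that(2,3)]
    by (simp add: compensated_survival_def exp_diff exp_minus field_simps)
  have "AE \<omega> in M. real_cond_exp M (F s) (\<lambda>\<omega>. exp (- (\<Sum>k=m..n. K (\<sigma> k) (r k) \<omega>))) \<omega>
    = compensated_survival K \<Lambda> (\<sigma> ` {m..n}) s \<omega> *
      exp (- (\<Sum>k=m..n. \<Lambda> (\<sigma> ` {k..n}) (r k) - \<Lambda> (\<sigma> ` {Suc k..n}) (r k)))"
  proof (rule real_cond_exp_exp_neg_sum_sorted[where K=K and \<Lambda>=\<Lambda> and \<sigma>=\<sigma> and r=r,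
        OF F _ _ \<Lambda>_empty _ \<sigma>(2) r_mono s])
    fix k assume k: "k \<in> {m..n}"
    then have "\<sigma> k \<in> U"
      using \<sigma>(1) by auto
    then show "adapted F (K (\<sigma> k))"
      by (rule K_adapted)
    show "0 \<le> K (\<sigma> k) t \<omega>" if "0 \<le> t" "\<omega> \<in> space M" for t \<omega>
      using mono_on_nonneg_of_zero[OF K_mono K_zero] \<open>\<sigma> k \<in> U\<close> that by blast
    show "martingale M F (compensated_survival K \<Lambda> (\<sigma> ` {k..n}))"
      by (rule martingale_cong[OF F \<eta>_mart[OF A_k[OF k]]]) (simp add: \<eta>_eq[OF k])
  qed
  then show ?thesis
    using AE_space
  proof eventually_elim
    case (elim \<omega>)
    then show ?case
      using \<eta>_eq[of m s \<omega>] \<open>m \<le> n\<close> s(1) by simp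
  qed
qed

theorem theorem4p1:
  fixes M :: "'a measure" and F :: "real \<Rightarrow> 'a measure" and n :: nat
    and K :: "nat \<Rightarrow> real \<Rightarrow> 'a \<Rightarrow> real" and \<Theta> :: "nat \<Rightarrow> 'a \<Rightarrow> real"
    and \<eta> :: "nat set \<Rightarrow> real \<Rightarrow> 'a \<Rightarrow> real" and \<Lambda> :: "nat set \<Rightarrow> real \<Rightarrow> real"
    and tt :: "nat \<Rightarrow> real" and \<sigma> :: "nat \<Rightarrow> nat"
  assumes P: "prob_space M"
    and UC: "usual_conditions M F"
    and n: "n \<ge> 1"
    and K_adapted: "\<And>i. i \<in> {1..n} \<Longrightarrow> adapted F (K i)"
    and K_cadlag: "\<And>i. i \<in> {1..n} \<Longrightarrow> cadlag M (K i)"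
    and K_mono: "\<And>i \<omega>. i \<in> {1..n} \<Longrightarrow> \<omega> \<in> space M \<Longrightarrow> mono_on {0..} (\<lambda>t. K i t \<omega>)"
    and K_zero: "\<And>i \<omega>. i \<in> {1..n} \<Longrightarrow> \<omega> \<in> space M \<Longrightarrow> K i 0 \<omega> = 0"
    and Theta_exp: "\<And>i. i \<in> {1..n} \<Longrightarrow> distributed M lborel (\<Theta> i) (exponential_density 1)"
    and Theta_indep: "prob_space.indep_sets M
         (\<lambda>j. case j of None \<Rightarrow> (\<Union>t\<in>{0..}. sets (F t))
                     | Some i \<Rightarrow> {\<Theta> i -` B \<inter> space M | B. B \<in> sets borel})
         (insert None (Some ` {1..n}))"
    and Lambda_empty: "\<And>t. \<Lambda> {} t = 0"
    and Lambda_cont: "\<And>J. J \<subseteq> {1..n} \<Longrightarrow> J \<noteq> {} \<Longrightarrow> continuous_on {0..} (\<Lambda> J)"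
    and eta_mart: "\<And>J. J \<subseteq> {1..n} \<Longrightarrow> J \<noteq> {} \<Longrightarrow> martingale M F (\<eta> J)"
    and eta_nonneg: "\<And>J t \<omega>. J \<subseteq> {1..n} \<Longrightarrow> J \<noteq> {} \<Longrightarrow> t \<ge> 0 \<Longrightarrow> \<omega> \<in> space M \<Longrightarrow> \<eta> J t \<omega> \<ge> 0"
    and eta_zero: "\<And>J \<omega>. J \<subseteq> {1..n} \<Longrightarrow> J \<noteq> {} \<Longrightarrow> \<omega> \<in> space M \<Longrightarrow> \<eta> J 0 \<omega> = 1"
    and factor: "\<And>J t \<omega>. J \<subseteq> {1..n} \<Longrightarrow> J \<noteq> {} \<Longrightarrow> t \<ge> 0 \<Longrightarrow> \<omega> \<in> space M \<Longrightarrow>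
         exp (- (\<Sum>j\<in>J. K j t \<omega>)) = \<eta> J t \<omega> * exp (- \<Lambda> J t)"
    and tt_nonneg: "\<And>i. i \<in> {1..n} \<Longrightarrow> tt i \<ge> 0"
    and \<sigma>_perm: "\<sigma> permutes {1..n}"
    and \<sigma>_sorted: "\<And>k l. 1 \<le> k \<Longrightarrow> k \<le> l \<Longrightarrow> l \<le> n \<Longrightarrow> tt (\<sigma> k) \<le> tt (\<sigma> l)"
  shows "\<forall>t. 0 \<le> t \<and> t \<le> Min (tt ` {1..n}) \<longrightarrow>
    (AE \<omega> in M.
       real_cond_exp M (F t)
         (indicator {\<omega>\<in>space M. \<forall>i\<in>{1..n}. hit_time (K i) (\<Theta> i) \<omega> > ereal (tt i)}) \<omega>
       = \<eta> (\<sigma> ` {1..n}) t \<omega> *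
         exp (- (\<Sum>k=1..n. \<Lambda> (\<sigma> ` {k..n}) (tt (\<sigma> k)) - \<Lambda> (\<sigma> ` {Suc k..n}) (tt (\<sigma> k)))))"
proof (intro allI impI)
  interpret prob_space M by (fact P)
  fix t assume t: "0 \<le> t \<and> t \<le> Min (tt ` {1..n})"
  let ?E = "{\<omega>\<in>space M. \<forall>i\<in>{1..n}. hit_time (K i) (\<Theta> i) \<omega> > ereal (tt i)}"
  let ?W = "\<lambda>\<omega>. exp (- (\<Sum>k=1..n. K (\<sigma> k) (tt (\<sigma> k)) \<omega>))"
  let ?C = "exp (- (\<Sum>k=1..n. \<Lambda> (\<sigma> ` {k..n}) (tt (\<sigma> k)) - \<Lambda> (\<sigma> ` {Suc k..n}) (tt (\<sigma> k))))"
  have F: "filtration M F"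
    using UC by (simp add: usual_conditions_def)
  have t_le: "t \<le> tt i" if "i \<in> {1..n}" for i
    using t Min_le[of "tt ` {1..n}" "tt i"] that by simp
  have \<sigma>_image: "\<sigma> ` {1..n} = {1..n}"
    by (rule permutes_image[OF \<sigma>_perm])
  then have \<sigma>_in: "\<sigma> k \<in> {1..n}" if "k \<in> {1..n}" for k
    using that by blast
  have "(\<Sum>i\<in>{1..n}. K i (tt i) \<omega>) = (\<Sum>k=1..n. K (\<sigma> k) (tt (\<sigma> k)) \<omega>)" for \<omega>
    using sum.permute[OF \<sigma>_perm, of "\<lambda>i. K i (tt i) \<omega>"] by (simp add: comp_def)
  then have "AE \<omega> in M. real_cond_exp M (F t) (indicator ?E) \<omega> = real_cond_exp M (F t) ?W \<omega>"
    using real_cond_exp_hit_times[where K=K and r=tt, OF F _ Theta_indep Theta_exp K_adapted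
        K_cadlag K_mono K_zero] t t_le
    by simp
  moreover have "AE \<omega> in M. real_cond_exp M (F t) ?W \<omega> = \<eta> (\<sigma> ` {1..n}) t \<omega> * ?C"
    using t t_le \<sigma>_image \<sigma>_in \<sigma>_sorted
    by (intro real_cond_exp_exp_neg_sum_sorted_factorization[where K=K and \<Lambda>=\<Lambda> and \<eta>=\<eta>
          and \<sigma>=\<sigma> and r="\<lambda>k. tt (\<sigma> k)", OF F n _ permutes_inj_on[OF \<sigma>_perm] K_adapted
          K_mono K_zero Lambda_empty eta_mart factor]) auto
  ultimately show "AE \<omega> in M. real_cond_exp M (F t) (indicator ?E) \<omega> = \<eta> (\<sigma> ` {1..n}) t \<omega> * ?C"
    by eventually_elim simp
qed

end
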